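(* Fix integers $k \ge 3$ and $i \in \{2,\dots,k-1\}$, and let $T = \{1,\dots,k\}\setminus\{i\}$. Let $d \ge 1$ and suppose that $S \subset C_d$ satisfies $|S| \equiv 1 \pmod{k-1}$ and $|S| \le d - \log_k d$. Then $T$ tiles $\mathbb{Z}_k^d \setminus S$, i.e. $\mathbb{Z}_k^d \setminus S$ is a disjoint union of copies of $T$ in $\mathbb{Z}_k^d$.
   Context: $\mathbb{Z}_k$ denotes the integers modulo $k$, with elements written $0,1,\dots,k-1$. A copy of $T$ in $\mathbb{Z}_k^d$ is a set of the form $\{x + j e_s : j \in \mathbb{Z}_k,\ j \ne j_0\}$ for some $x \in \mathbb{Z}_k^d$, some coordinate direction $s \in \{1,\dots,d\}$ (with $e_s$ the $s$-th unit vector) and some $j_0 \in \mathbb{Z}_k$; that is, a line in one coordinate direction with one point removed (equivalently, a translate of the image of $T$ under $\mathbb{Z}\to\mathbb{Z}_k$ placed along one coordinate axis). For $1 \le j \le d$, the $j$-th corner $c_{j,d} \in \mathbb{Z}_k^d$ is the point whose $j$-th coordinate is $k-1$ and whose other coordinates are $0$, and $C_d = \{c_{j,d} : 1 \le j \le d\}$. *)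

theory Defs
  imports Complex_Main
begin

text \<open>Points of Z_k^d are functions nat => nat with coordinates 0..d-1 in {0..k-1}
  and all further coordinates equal to 0.\<close>
definition grid :: "nat \<Rightarrow> nat \<Rightarrow> (nat \<Rightarrow> nat) set" where
  "grid k d = {x. (\<forall>j<d. x j < k) \<and> (\<forall>j\<ge>d. x j = 0)}"

definition copy_of :: "nat \<Rightarrow> nat \<Rightarrow> nat set \<Rightarrow> (nat \<Rightarrow> nat) set \<Rightarrow> bool" where
  "copy_of k d T A \<longleftrightarrow> (\<exists>x\<in>grid k d. \<exists>s<d.
      A = (\<lambda>t. x(s := (x s + t) mod k)) ` T)"

definition tiles :: "nat \<Rightarrow> nat \<Rightarrow> nat set \<Rightarrow> (nat \<Rightarrow> nat) set \<Rightarrow> bool" where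
  "tiles k d T X \<longleftrightarrow> (\<exists>P. (\<forall>A\<in>P. copy_of k d T A) \<and> pairwise disjnt P \<and> \<Union>P = X)"

text \<open>The corner c_{j,d} (0-indexed: j < d): j-th coordinate k-1, others 0.\<close>
definition corner :: "nat \<Rightarrow> nat \<Rightarrow> (nat \<Rightarrow> nat)" where
  "corner k j = (\<lambda>m. if m = j then k - 1 else 0)"

definition corners :: "nat \<Rightarrow> nat \<Rightarrow> (nat \<Rightarrow> nat) set" where
  "corners k d = corner k ` {..<d}"

end

theory Submission
  imports Defs "HOL-Library.Disjoint_Sets"
begin

text \<open>
  Modulo k, T is Z_k with one residue removed, so every punctured line (a coordinate line
  with one point removed) is a copy of T, and it suffices to partition Z_k^d minus S into
  punctured lines. Let J be the set of directions of the corners in S and fix s in J.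
  The lines in direction s, each punctured at its point on the hyperplane x_s = 0, except the
  line through the origin, which is punctured at the corner c_s instead, cover everything
  outside that hyperplane as well as the origin.

  On the hyperplane it remains to tile the cube on J' \<union> F, where J' = J - {s} and F is the
  set of directions outside J, minus the origin and the corners of J'. Here k - 1 divides
  |J'| and |J'| < k^|F|, which is where |S| \<le> d - log_k d is used. A cube minus one point is
  always tileable; from a tiling of the cube on F minus the origin take whole lines forming a
  set W of |J'| points and match W bijectively with J' by g. The hook through z \<in> W runs in
  direction g z and misses the value k - 1. Together with a tiling of the cube on J' minus its
  axes, the hooks leave in every fibre over a point y of the cube on J' exactly one point
  uncovered (for an inner axis point y = u e_j, 0 < u < k - 1, the point of the hook from
  g^-1 j), so the fibre is tileable; in the fibre over the origin what is left is the cube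
  on F minus the origin and W, the union of the remaining lines.
\<close>

definition cube :: "nat \<Rightarrow> nat set \<Rightarrow> (nat \<Rightarrow> nat) \<Rightarrow> (nat \<Rightarrow> nat) set" where
  "cube k D b = {x. (\<forall>j\<in>D. x j < k) \<and> (\<forall>j. j \<notin> D \<longrightarrow> x j = b j)}"

definition punctured_line :: "nat \<Rightarrow> (nat \<Rightarrow> nat) \<Rightarrow> nat \<Rightarrow> nat \<Rightarrow> (nat \<Rightarrow> nat) set" where
  "punctured_line k x s p = (\<lambda>u. x(s := u)) ` ({..<k} - {p})"

definition punctured_lines :: "nat \<Rightarrow> (nat \<Rightarrow> nat) set set" where
  "punctured_lines k = {punctured_line k x s p | x s p. p < k}"

definition line_tileable :: "nat \<Rightarrow> (nat \<Rightarrow> nat) set \<Rightarrow> bool" where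
  "line_tileable k X \<longleftrightarrow> (\<exists>P \<subseteq> punctured_lines k. disjoint P \<and> \<Union>P = X)"

abbreviation origin :: "nat \<Rightarrow> nat" where
  "origin \<equiv> \<lambda>_. 0"

definition axes :: "nat \<Rightarrow> nat set \<Rightarrow> (nat \<Rightarrow> nat) set" where
  "axes k J = {x \<in> cube k J origin. \<forall>t t'. x t \<noteq> 0 \<longrightarrow> x t' \<noteq> 0 \<longrightarrow> t = t'}"

subsection \<open>Tilings by punctured lines\<close>

lemma line_tileable_empty [simp]: "line_tileable k {}"
  unfolding line_tileable_def by (rule exI[of _ "{}"]) auto

lemma line_tileable_punctured_line: "p < k \<Longrightarrow> line_tileable k (punctured_line k x s p)"
  unfolding line_tileable_def punctured_lines_def
  by (rule exI[of _ "{punctured_line k x s p}"]) auto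

lemma line_tileable_UN:
  assumes "\<And>a. a \<in> I \<Longrightarrow> line_tileable k (A a)" and "disjoint_family_on A I"
  shows "line_tileable k (\<Union>a\<in>I. A a)"
proof -
  obtain P where P: "\<And>a. a \<in> I \<Longrightarrow> P a \<subseteq> punctured_lines k \<and> disjoint (P a) \<and> \<Union>(P a) = A a"
    using assms(1) unfolding line_tileable_def by metis
  have "\<Union>(\<Union>a\<in>I. P a) = (\<Union>a\<in>I. \<Union>(P a))"
    by blast
  also have "\<dots> = (\<Union>a\<in>I. A a)"
    using P by (intro SUP_cong) auto
  finally have "\<Union>(\<Union>a\<in>I. P a) = (\<Union>a\<in>I. A a)" .
  moreover have "disjoint (\<Union>a\<in>I. P a)"
  proof (rule disjoint_UN)
    show "disjoint_family_on (\<lambda>a. \<Union>(P a)) I"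
      using assms(2) P unfolding disjoint_family_on_def by metis
  qed (use P in blast)
  moreover have "(\<Union>a\<in>I. P a) \<subseteq> punctured_lines k"
    using P by blast
  ultimately show ?thesis
    unfolding line_tileable_def by blast
qed

lemma line_tileable_Un:
  assumes "line_tileable k A" "line_tileable k B" "A \<inter> B = {}"
  shows "line_tileable k (A \<union> B)"
  using line_tileable_UN[of "{True, False}" k "\<lambda>b. if b then A else B"] assms
  by (simp add: disjoint_family_on_def Int_commute Un_commute)

lemma mem_punctured_line: "z \<in> punctured_line k x s p \<longleftrightarrow> (\<exists>u<k. u \<noteq> p \<and> z = x(s := u))"
  unfolding punctured_line_def by auto

lemma card_punctured_line: "p < k \<Longrightarrow> card (punctured_line k x s p) = k - 1"
  unfolding punctured_line_def
  by (subst card_image) (auto simp: inj_on_def dest: fun_cong[where x = s])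

lemma punctured_lines_meet_agree:
  assumes "z \<in> punctured_line k x s p" "z \<in> punctured_line k x' s' p'" "t \<noteq> s" "t \<noteq> s'"
  shows "x t = x' t"
  using assms unfolding mem_punctured_line by (metis fun_upd_other)

subsection \<open>Subcubes\<close>

lemma cube_empty [simp]: "cube k {} b = {b}"
  unfolding cube_def by auto

lemma mem_cube_insert:
  "s \<notin> D \<Longrightarrow> x \<in> cube k (insert s D) b \<longleftrightarrow> x s < k \<and> x(s := b s) \<in> cube k D b"
  unfolding cube_def by auto

lemma cube_eq_cube_of_mem: "p \<in> cube k D b \<Longrightarrow> cube k D p = cube k D b"
  unfolding cube_def by auto

lemma fun_upd_eq_fun_upd_cubeD:
  assumes "s \<notin> D" "y \<in> cube k D b" "y' \<in> cube k D b" "y(s := u) = y'(s := u')"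
  shows "y = y' \<and> u = u'"
proof -
  have "y t = y' t" if "t \<noteq> s" for t
    using fun_cong[OF assms(4), of t] that by simp
  moreover have "y s = y' s"
    using assms(1-3) unfolding cube_def by auto
  ultimately have "y = y'"
    by (metis ext)
  then show ?thesis
    using fun_cong[OF assms(4), of s] by simp
qed

lemma line_tileable_parallel_lines:
  assumes "s \<notin> D" "B \<subseteq> cube k D b" "\<And>y. y \<in> B \<Longrightarrow> q y < k"
  shows "line_tileable k (\<Union>y\<in>B. punctured_line k y s (q y))"
proof (rule line_tileable_UN)
  show "line_tileable k (punctured_line k y s (q y))" if "y \<in> B" for y
    using assms(3)[OF that] by (rule line_tileable_punctured_line)
  show "disjoint_family_on (\<lambda>y. punctured_line k y s (q y)) B"
    unfolding disjoint_family_on_def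
  proof (intro ballI impI)
    fix y y' assume y: "y \<in> B" "y' \<in> B" "y \<noteq> y'"
    then have distinct: "y(s := u) \<noteq> y'(s := u')" for u u'
      using fun_upd_eq_fun_upd_cubeD[OF assms(1)] assms(2) by blast
    show "punctured_line k y s (q y) \<inter> punctured_line k y' s (q y') = {}"
    proof (rule equals0I)
      fix x assume "x \<in> punctured_line k y s (q y) \<inter> punctured_line k y' s (q y')"
      then obtain u u' where "x = y(s := u)" "x = y'(s := u')"
        unfolding Int_iff mem_punctured_line by blast
      with distinct show False
        by metis
    qed
  qed
qed

lemma cube_insert_eq_lines_Un_section:
  assumes "s \<notin> D" "\<And>y. y \<in> cube k D b \<Longrightarrow> q y < k"
  shows "cube k (insert s D) b
    = (\<Union>y\<in>cube k D b. punctured_line k y s (q y)) \<union> (\<lambda>y. y(s := q y)) ` cube k D b"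
proof (intro equalityI subsetI)
  fix x assume x: "x \<in> cube k (insert s D) b"
  define y where "y = x(s := b s)"
  have y: "y \<in> cube k D b" "y(s := x s) = x" "x s < k"
    using x assms(1) unfolding y_def mem_cube_insert[OF assms(1)] by auto
  show "x \<in> (\<Union>y\<in>cube k D b. punctured_line k y s (q y)) \<union> (\<lambda>y. y(s := q y)) ` cube k D b"
  proof (cases "x s = q y")
    case True
    then have "y(s := q y) = x"
      using y(2) by simp
    then show ?thesis
      using y(1) by blast
  next
    case False
    then have "x \<in> punctured_line k y s (q y)"
      using y(2,3) unfolding mem_punctured_line by metis
    then show ?thesis
      using y(1) by blast
  qed
next
  fix x assume "x \<in> (\<Union>y\<in>cube k D b. punctured_line k y s (q y)) \<union> (\<lambda>y. y(s := q y)) ` cube k D b"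
  then show "x \<in> cube k (insert s D) b"
    using assms by (auto simp: cube_def mem_punctured_line)
qed

lemma lines_disjoint_section:
  assumes "s \<notin> D"
  shows "(\<Union>y\<in>cube k D b. punctured_line k y s (q y)) \<inter> (\<lambda>y. y(s := q y)) ` cube k D b = {}"
proof -
  have "y'(s := q y') \<notin> punctured_line k y s (q y)"
    if "y \<in> cube k D b" "y' \<in> cube k D b" for y y'
    using fun_upd_eq_fun_upd_cubeD[OF assms that] unfolding mem_punctured_line by metis
  then show ?thesis
    by blast
qed

lemma line_tileable_cube_insert_Diff:
  assumes "s \<notin> D" "\<And>y. y \<in> cube k D b \<Longrightarrow> q y < k"
    and "Y \<subseteq> (\<lambda>y. y(s := q y)) ` cube k D b"
    and "line_tileable k ((\<lambda>y. y(s := q y)) ` cube k D b - Y)"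
  shows "line_tileable k (cube k (insert s D) b - Y)"
proof -
  define L where "L = (\<Union>y\<in>cube k D b. punctured_line k y s (q y))"
  define S where "S = (\<lambda>y. y(s := q y)) ` cube k D b"
  have "cube k (insert s D) b = L \<union> S"
    unfolding L_def S_def using assms(1,2) by (rule cube_insert_eq_lines_Un_section)
  moreover have "L \<inter> S = {}"
    unfolding L_def S_def using assms(1) by (rule lines_disjoint_section)
  ultimately have "cube k (insert s D) b - Y = L \<union> (S - Y)" "L \<inter> (S - Y) = {}"
    using assms(3) unfolding S_def[symmetric] by blast+
  moreover have "line_tileable k L"
    unfolding L_def using assms(1) subset_refl assms(2) by (rule line_tileable_parallel_lines)
  ultimately show ?thesis
    using line_tileable_Un assms(4) unfolding S_def[symmetric] by metis
qed

lemma line_tileable_cube_Diff_point: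
  assumes "finite D" "p \<in> cube k D b"
  shows "line_tileable k (cube k D b - {p})"
  using assms
proof (induction D arbitrary: b p rule: finite_induct)
  case empty
  then show ?case
    by simp
next
  case (insert s D)
  have section_eq: "(\<lambda>y. y(s := p s)) ` cube k D p = cube k D p"
    using insert.hyps(2) by (force simp: cube_def)
  have "p \<in> cube k D p" "p s < k"
    using insert.prems by (auto simp: cube_def)
  then have "line_tileable k (cube k (insert s D) p - {p})"
    using insert.IH by (intro line_tileable_cube_insert_Diff[OF insert.hyps(2)]) (auto simp: section_eq)
  then show ?case
    using cube_eq_cube_of_mem[OF insert.prems] by simp
qed

lemma card_cube: "finite D \<Longrightarrow> card (cube k D b) = k ^ card D"
proof (induction D rule: finite_induct)
  case empty
  then show ?case
    by simp
next
  case (insert s D)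
  let ?f = "\<lambda>(y, u). y(s := u)"
  have "cube k (insert s D) b = ?f ` (cube k D b \<times> {..<k})"
  proof (intro equalityI subsetI)
    fix x assume "x \<in> cube k (insert s D) b"
    then have "(x(s := b s), x s) \<in> cube k D b \<times> {..<k}"
      using insert.hyps(2) by (simp add: mem_cube_insert)
    then show "x \<in> ?f ` (cube k D b \<times> {..<k})"
      by (rule rev_image_eqI) simp
  qed (use insert.hyps(2) in \<open>auto simp: cube_def\<close>)
  moreover have "inj_on ?f (cube k D b \<times> {..<k})"
    using fun_upd_eq_fun_upd_cubeD[OF insert.hyps(2)] by (auto simp: inj_on_def)
  ultimately show ?case
    using insert by (simp add: card_image card_cartesian_product)
qed

lemma finite_cube: "finite D \<Longrightarrow> 0 < k \<Longrightarrow> finite (cube k D b)"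
  using card_cube[of D k b] by (metis card.infinite power_not_zero less_not_refl2)

lemma origin_upd_mem_axes: "j \<in> J \<Longrightarrow> u < k \<Longrightarrow> origin(j := u) \<in> axes k J"
  unfolding axes_def cube_def by auto

lemma mem_axes_insert_iff:
  "0 < k \<Longrightarrow> s \<notin> J \<Longrightarrow> x s = 0 \<Longrightarrow> x \<in> axes k (insert s J) \<longleftrightarrow> x \<in> axes k J"
  unfolding axes_def cube_def by (auto, metis)

lemma punctured_line_disjoint_axes:
  assumes "s \<notin> J" "y \<in> cube k J origin" "y \<noteq> origin"
  shows "punctured_line k y s 0 \<inter> (cube k J origin \<union> axes k (insert s J)) = {}"
proof -
  obtain t where t: "y t \<noteq> 0"
    using assms(3) by auto
  then have "t \<noteq> s"
    using assms(1,2) by (auto simp: cube_def)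
  have "x \<notin> cube k J origin" "x \<notin> axes k (insert s J)" if x: "x \<in> punctured_line k y s 0" for x
  proof -
    obtain u where "0 < u" "x = y(s := u)"
      using x unfolding mem_punctured_line by blast
    then have "x s \<noteq> 0" "x t \<noteq> 0"
      using t \<open>t \<noteq> s\<close> by simp_all
    then show "x \<notin> cube k J origin" "x \<notin> axes k (insert s J)"
      using assms(1) \<open>t \<noteq> s\<close> unfolding axes_def cube_def by auto
  qed
  then show ?thesis
    by blast
qed

lemma cube_insert_Diff_axes:
  assumes "0 < k" "s \<notin> J"
  shows "cube k (insert s J) origin - axes k (insert s J)
    = (\<Union>y\<in>cube k J origin - {origin}. punctured_line k y s 0) \<union> (cube k J origin - axes k J)"
proof -
  define L where "L y = punctured_line k y s 0" for y
  have "(\<lambda>y. y(s := 0)) ` cube k J origin = cube k J origin"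
    using assms(2) by (force simp: cube_def)
  then have "cube k (insert s J) origin = (\<Union>y\<in>cube k J origin. L y) \<union> cube k J origin"
    using cube_insert_eq_lines_Un_section[OF assms(2), of k origin "\<lambda>_. 0"] assms(1)
    unfolding L_def by simp
  moreover have "L origin \<subseteq> axes k (insert s J)"
    using origin_upd_mem_axes[of s "insert s J" _ k] by (auto simp: L_def mem_punctured_line)
  moreover have "L y \<inter> (cube k J origin \<union> axes k (insert s J)) = {}"
    if "y \<in> cube k J origin - {origin}" for y
    unfolding L_def using that by (intro punctured_line_disjoint_axes[OF assms(2)]) auto
  moreover have "cube k J origin \<inter> axes k (insert s J) = axes k J"
  proof -
    have "x s = 0" if "x \<in> cube k J origin" for x
      using that assms(2) unfolding cube_def by simp
    moreover have "axes k J \<subseteq> cube k J origin"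
      unfolding axes_def by blast
    ultimately show ?thesis
      using mem_axes_insert_iff[OF assms] by blast
  qed
  ultimately show ?thesis
    unfolding L_def[symmetric] by (auto simp: disjoint_iff)
qed

lemma line_tileable_cube_Diff_axes:
  assumes "finite J" "0 < k"
  shows "line_tileable k (cube k J origin - axes k J)"
  using assms(1)
proof (induction J rule: finite_induct)
  case empty
  then show ?case
    by (simp add: axes_def)
next
  case (insert s J)
  have "line_tileable k (\<Union>y\<in>cube k J origin - {origin}. punctured_line k y s 0)"
    using insert.hyps(2) by (rule line_tileable_parallel_lines) (use assms(2) in auto)
  moreover have "punctured_line k y s 0 \<inter> cube k J origin = {}"
    if "y \<in> cube k J origin - {origin}" for y
    using punctured_line_disjoint_axes[OF insert.hyps(2), of y k] that by blast
  then have "(\<Union>y\<in>cube k J origin - {origin}. punctured_line k y s 0) \<inter> cube k J origin = {}"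
    by blast
  ultimately show ?case
    unfolding cube_insert_Diff_axes[OF assms(2) insert.hyps(2)]
    using insert.IH by (intro line_tileable_Un) auto
qed

lemma line_tileable_by_fibres:
  assumes "J \<inter> F = {}" "X \<subseteq> cube k (J \<union> F) b"
    and "\<And>y. y \<in> cube k J b \<Longrightarrow> line_tileable k (X \<inter> cube k F y)"
  shows "line_tileable k X"
proof -
  have "X = (\<Union>y\<in>cube k J b. X \<inter> cube k F y)"
  proof (intro equalityI subsetI)
    fix x assume "x \<in> X"
    moreover have "(\<lambda>t. if t \<in> F then b t else x t) \<in> cube k J b"
      "x \<in> cube k F (\<lambda>t. if t \<in> F then b t else x t)"
      using \<open>x \<in> X\<close> assms(1,2) unfolding cube_def by auto
    ultimately show "x \<in> (\<Union>y\<in>cube k J b. X \<inter> cube k F y)"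
      by blast
  qed blast
  moreover have "disjoint_family_on (\<lambda>y. X \<inter> cube k F y) (cube k J b)"
    unfolding disjoint_family_on_def
  proof (intro ballI impI)
    fix y y' assume y: "y \<in> cube k J b" "y' \<in> cube k J b" "y \<noteq> y'"
    have agree: "y t = y' t" if "x \<in> cube k F y" "x \<in> cube k F y'" for x t
    proof (cases "t \<in> F")
      case True
      then have "t \<notin> J"
        using assms(1) by blast
      then show ?thesis
        using y(1,2) unfolding cube_def by simp
    next
      case False
      then show ?thesis
        using that unfolding cube_def by simp
    qed
    show "X \<inter> cube k F y \<inter> (X \<inter> cube k F y') = {}"
    proof (rule ccontr)
      assume "X \<inter> cube k F y \<inter> (X \<inter> cube k F y') \<noteq> {}"
      then obtain x where "x \<in> cube k F y" "x \<in> cube k F y'"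
        by blast
      then have "y = y'"
        using agree by (intro ext)
      with y(3) show False ..
    qed
  qed
  then have "line_tileable k (\<Union>y\<in>cube k J b. X \<inter> cube k F y)"
    using assms(3) by (intro line_tileable_UN)
  ultimately show ?thesis
    by simp
qed

lemma card_Union_punctured_lines:
  assumes "P \<subseteq> punctured_lines k" "disjoint P" "finite (\<Union>P)"
  shows "card (\<Union>P) = (k - 1) * card P"
proof -
  have "card (\<Union>P) = (\<Sum>L\<in>P. card L)"
    using assms(2,3) by (intro card_Union_disjoint) (auto intro: rev_finite_subset)
  also have "\<dots> = (\<Sum>L\<in>P. k - 1)"
    using assms(1) by (intro sum.cong) (auto simp: punctured_lines_def card_punctured_line)
  finally show ?thesis
    by simp
qed

lemma line_tileable_obtain_Diff:
  assumes "line_tileable k X" "finite X" "(k - 1) dvd n" "n \<le> card X"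
  obtains W where "W \<subseteq> X" "card W = n" "line_tileable k (X - W)"
proof -
  obtain P where P: "P \<subseteq> punctured_lines k" "disjoint P" "\<Union>P = X"
    using assms(1) unfolding line_tileable_def by blast
  have card_X: "card X = (k - 1) * card P"
    using card_Union_punctured_lines[OF P(1,2)] P(3) assms(2) by simp
  define m where "m = n div (k - 1)"
  have m: "n = (k - 1) * m"
    using assms(3) unfolding m_def by simp
  have "m \<le> card P"
  proof (cases "k - 1 = 0")
    case True
    then show ?thesis
      unfolding m_def by simp
  next
    case False
    then show ?thesis
      using assms(4) unfolding card_X m by simp
  qed
  then obtain Q where Q: "Q \<subseteq> P" "card Q = m"
    using obtain_subset_with_card_n by metis
  show ?thesis
  proof
    show "\<Union>Q \<subseteq> X"
      using Q(1) P(3) by blast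
    have "Q \<subseteq> punctured_lines k" "disjoint Q" "finite (\<Union>Q)"
      using Q(1) P assms(2) by (auto intro: pairwise_subset rev_finite_subset)
    then have "card (\<Union>Q) = (k - 1) * card Q"
      by (rule card_Union_punctured_lines)
    then show "card (\<Union>Q) = n"
      using Q(2) m by simp
    have "X - \<Union>Q = \<Union>(P - Q)"
      using P(2,3) Q(1) by (auto dest: disjointD)
    moreover have "P - Q \<subseteq> punctured_lines k" "disjoint (P - Q)"
      using P(1,2) by (auto intro: pairwise_subset)
    then have "line_tileable k (\<Union>(P - Q))"
      unfolding line_tileable_def by blast
    ultimately show "line_tileable k (X - \<Union>Q)"
      by simp
  qed
qed

subsection \<open>Removing the origin and the corners\<close>

lemma corner_eq_origin_upd: "corner k j = origin(j := k - 1)"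
  unfolding corner_def by (simp add: fun_eq_iff)

lemma origin_corners_subset_axes:
  assumes "0 < k"
  shows "insert origin (corner k ` J) \<subseteq> axes k J"
proof -
  have "origin \<in> axes k J"
    using assms by (simp add: axes_def cube_def)
  moreover have "corner k j \<in> axes k J" if "j \<in> J" for j
    using origin_upd_mem_axes[OF that, of "k - 1" k] assms by (simp add: corner_eq_origin_upd)
  ultimately show ?thesis
    by blast
qed

lemma mem_axes_Diff_corners:
  assumes "y \<in> axes k J - insert origin (corner k ` J)"
  obtains j v where "j \<in> J" "0 < v" "v < k - 1" "y = origin(j := v)"
proof -
  obtain j where j: "y j \<noteq> 0"
    using assms by auto
  have "y t = 0" if "t \<noteq> j" for t
    using assms j that unfolding axes_def by auto
  then have "origin(j := y j) = y"
    by (auto simp: fun_eq_iff)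
  moreover have "j \<in> J" "y j < k"
    using assms j unfolding axes_def cube_def by auto
  moreover have "y j \<noteq> k - 1"
  proof
    assume "y j = k - 1"
    then have "corner k j = y"
      using calculation(1) unfolding corner_eq_origin_upd by simp
    then have "y \<in> corner k ` J"
      using calculation(2) by blast
    with assms show False
      by blast
  qed
  ultimately show ?thesis
    using that[of j "y j"] j by simp
qed

lemma mem_cube_fibre_iff:
  assumes "J \<inter> F = {}" "y \<in> cube k J b" "x \<in> cube k F y"
  shows "x \<in> cube k J b \<longleftrightarrow> x = y"
proof
  assume x: "x \<in> cube k J b"
  show "x = y"
  proof
    fix t
    have "t \<notin> J" if "t \<in> F"
      using assms(1) that by blast
    then show "x t = y t"
      using assms(2,3) x unfolding cube_def by (cases "t \<in> F") auto
  qed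
qed (use assms(2) in simp)

lemma origin_upd_mem_fibre_iff:
  assumes "J \<inter> F = {}" "y \<in> cube k J origin" "z \<in> cube k F origin" "j \<notin> F"
  shows "z(j := u) \<in> cube k F y \<longleftrightarrow> origin(j := u) = y"
proof
  have on_F: "(origin(j := u)) t = y t" if "t \<in> F" for t
  proof -
    have "t \<notin> J" "t \<noteq> j"
      using assms(1,4) that by blast+
    then show ?thesis
      using assms(2) unfolding cube_def by simp
  qed
  have off_F: "(z(j := u)) t = (origin(j := u)) t" if "t \<notin> F" for t
    using that assms(3) unfolding cube_def by auto
  show "origin(j := u) = y" if "z(j := u) \<in> cube k F y"
  proof
    fix t show "(origin(j := u)) t = y t"
      using that on_F off_F unfolding cube_def by (cases "t \<in> F") auto
  qed
  show "z(j := u) \<in> cube k F y" if "origin(j := u) = y"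
    using that assms(3,4) off_F unfolding cube_def by auto
qed

lemma origin_upd_eq_origin_upd_iff:
  "origin(a := u) = origin(b := v) \<longleftrightarrow> (u = 0 \<and> v = 0) \<or> (a = b \<and> u = v)"
  by (auto simp: fun_eq_iff)

locale hook_system =
  fixes k :: nat and J F :: "nat set" and W :: "(nat \<Rightarrow> nat) set" and g :: "(nat \<Rightarrow> nat) \<Rightarrow> nat"
  assumes three_le_k: "3 \<le> k"
    and disjoint_J_F: "J \<inter> F = {}"
    and W_subset: "W \<subseteq> cube k F origin - {origin}"
    and bij_g: "bij_betw g W J"
    and finite_F: "finite F"
begin

definition hooks :: "(nat \<Rightarrow> nat) set" where
  "hooks = (\<Union>z\<in>W. punctured_line k z (g z) (k - 1))"

lemma g_mem: "z \<in> W \<Longrightarrow> g z \<in> J"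
  using bij_g by (auto simp: bij_betw_def)

lemma g_notin_F: "z \<in> W \<Longrightarrow> g z \<notin> F"
  using g_mem disjoint_J_F by blast

lemma W_mem_cube: "z \<in> W \<Longrightarrow> z \<in> cube k F origin"
  using W_subset by blast

lemma W_nonzero_on_F:
  assumes "z \<in> W"
  obtains t where "t \<in> F" "z t \<noteq> 0"
proof -
  have "z \<noteq> origin"
    using W_subset assms by blast
  then obtain t where "z t \<noteq> 0"
    by auto
  moreover have "t \<in> F"
    using W_mem_cube[OF assms] calculation unfolding cube_def by auto
  ultimately show ?thesis
    using that by blast
qed

lemma mem_hooks: "x \<in> hooks \<longleftrightarrow> (\<exists>z\<in>W. \<exists>u < k - 1. x = z(g z := u))"
proof -
  have "u < k \<and> u \<noteq> k - 1 \<longleftrightarrow> u < k - 1" for u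
    using three_le_k by auto
  then show ?thesis
    by (auto simp: hooks_def mem_punctured_line)
qed

lemma line_tileable_hooks: "line_tileable k hooks"
  unfolding hooks_def
proof (rule line_tileable_UN)
  show "line_tileable k (punctured_line k z (g z) (k - 1))" for z
    using three_le_k by (intro line_tileable_punctured_line) simp
  show "disjoint_family_on (\<lambda>z. punctured_line k z (g z) (k - 1)) W"
    unfolding disjoint_family_on_def
  proof (intro ballI impI)
    fix z z' assume z: "z \<in> W" "z' \<in> W" "z \<noteq> z'"
    have "z = z'" if "x \<in> punctured_line k z (g z) (k - 1)" "x \<in> punctured_line k z' (g z') (k - 1)" for x
    proof
      fix t show "z t = z' t"
      proof (cases "t \<in> F")
        case True
        then show ?thesis
          using punctured_lines_meet_agree[OF that] g_notin_F z(1,2) by metis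
      next
        case False
        then show ?thesis
          using W_mem_cube[OF z(1)] W_mem_cube[OF z(2)] unfolding cube_def by simp
      qed
    qed
    then show "punctured_line k z (g z) (k - 1) \<inter> punctured_line k z' (g z') (k - 1) = {}"
      using z(3) by blast
  qed
qed

lemma hooks_subset: "hooks \<subseteq> cube k (J \<union> F) origin - cube k J origin"
proof
  fix x assume "x \<in> hooks"
  then obtain z u where z: "z \<in> W" "u < k - 1" "x = z(g z := u)"
    unfolding mem_hooks by blast
  obtain t where t: "t \<in> F" "z t \<noteq> 0"
    using W_nonzero_on_F[OF z(1)] .
  have "x \<in> cube k (J \<union> F) origin"
    using z W_mem_cube[OF z(1)] g_mem[OF z(1)] unfolding cube_def by auto
  moreover have "x t \<noteq> 0" "t \<notin> J"
    using t z(3) g_notin_F[OF z(1)] disjoint_J_F by auto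
  ultimately show "x \<in> cube k (J \<union> F) origin - cube k J origin"
    unfolding cube_def by auto
qed

lemma hooks_Int_fibre:
  assumes "y \<in> cube k J origin"
  shows "hooks \<inter> cube k F y = {z(g z := u) | z u. z \<in> W \<and> u < k - 1 \<and> origin(g z := u) = y}"
  using origin_upd_mem_fibre_iff[OF disjoint_J_F assms W_mem_cube g_notin_F]
  by (auto simp: mem_hooks) blast+

lemma W_upd_zero: "z \<in> W \<Longrightarrow> z(g z := 0) = z"
  using W_mem_cube g_notin_F unfolding cube_def by (simp add: fun_upd_idem)

lemma hooks_Int_fibre_origin: "hooks \<inter> cube k F origin = W"
proof -
  have origin: "origin \<in> cube k J origin"
    using three_le_k unfolding cube_def by simp
  have "0 < k - 1"
    using three_le_k by simp
  then have "hooks \<inter> cube k F origin = {z(g z := 0) | z. z \<in> W}"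
    unfolding hooks_Int_fibre[OF origin] by (auto simp: fun_upd_idem_iff)
  also have "\<dots> = W"
    using W_upd_zero by (auto, metis)
  finally show ?thesis .
qed

lemma hooks_Int_fibre_inner_axis:
  assumes "j \<in> J" "0 < v" "v < k - 1"
  shows "hooks \<inter> cube k F (origin(j := v)) = {(inv_into W g j)(j := v)}"
proof -
  have y: "origin(j := v) \<in> cube k J origin"
    using assms three_le_k unfolding cube_def by auto
  have "z \<in> W \<and> g z = j \<longleftrightarrow> z = inv_into W g j" for z
    using bij_g assms(1) by (metis bij_betw_imp_surj_on bij_betw_inv_into_left f_inv_into_f inv_into_into)
  moreover have "g (inv_into W g j) = j"
    using bij_g assms(1) by (rule bij_betw_inv_into_right)
  ultimately show ?thesis
    unfolding hooks_Int_fibre[OF y] origin_upd_eq_origin_upd_iff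
    using assms(2,3) by auto
qed

lemma hooks_Int_fibre_empty:
  assumes "y \<in> cube k J origin" "y \<noteq> origin" "y \<notin> axes k J - insert origin (corner k ` J)"
  shows "hooks \<inter> cube k F y = {}"
proof -
  have "origin(g z := u) \<noteq> y" if "z \<in> W" "u < k - 1" for z u
  proof
    assume y: "origin(g z := u) = y"
    then have "u \<noteq> 0"
      using assms(2) by auto
    moreover have "y \<in> axes k J"
      using origin_upd_mem_axes[OF g_mem[OF that(1)], of u k] that(2) y by simp
    moreover have "origin(g z := u) \<noteq> corner k j" for j
      using that(2) calculation(1) unfolding corner_eq_origin_upd origin_upd_eq_origin_upd_iff
      by auto
    then have "y \<notin> corner k ` J"
      using y by blast
    ultimately show False
      using assms(2,3) by blast
  qed
  then show ?thesis
    unfolding hooks_Int_fibre[OF assms(1)] by blast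
qed

lemma fibre_Diff_hooks:
  assumes "y \<in> cube k J origin"
  shows "(cube k (J \<union> F) origin - insert origin (corner k ` J)
      - (hooks \<union> (cube k J origin - axes k J))) \<inter> cube k F y
    = cube k F y - ({y} - (axes k J - insert origin (corner k ` J))) - hooks \<inter> cube k F y"
proof -
  have "cube k F y \<subseteq> cube k (J \<union> F) origin"
    using assms unfolding cube_def by auto
  moreover have "x \<in> cube k J origin \<longleftrightarrow> x = y" if "x \<in> cube k F y" for x
    using disjoint_J_F assms that by (rule mem_cube_fibre_iff)
  moreover have "insert origin (corner k ` J) \<subseteq> axes k J" "axes k J \<subseteq> cube k J origin"
    using origin_corners_subset_axes three_le_k unfolding axes_def by auto
  ultimately show ?thesis
    by blast
qed

lemma line_tileable_fibre:
  assumes "line_tileable k (cube k F origin - {origin} - W)" and y: "y \<in> cube k J origin"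
  shows "line_tileable k (cube k F y - ({y} - (axes k J - insert origin (corner k ` J)))
    - hooks \<inter> cube k F y)"
proof -
  consider "y = origin" | "y \<in> axes k J - insert origin (corner k ` J)"
    | "y \<noteq> origin" "y \<notin> axes k J - insert origin (corner k ` J)"
    by blast
  then show ?thesis
  proof cases
    case 1
    moreover have "{origin} - (axes k J - insert origin (corner k ` J)) = {origin}"
      by blast
    ultimately show ?thesis
      using assms(1) hooks_Int_fibre_origin by simp
  next
    case 2
    then obtain j v where j: "j \<in> J" "0 < v" "v < k - 1" "y = origin(j := v)"
      by (rule mem_axes_Diff_corners)
    have "inv_into W g j \<in> W"
      using bij_g j(1) by (metis bij_betw_imp_surj_on inv_into_into)
    then have "(inv_into W g j)(j := v) \<in> cube k F y"
      using origin_upd_mem_fibre_iff[OF disjoint_J_F y W_mem_cube] j disjoint_J_F by blast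
    then show ?thesis
      using line_tileable_cube_Diff_point[OF finite_F] 2 j hooks_Int_fibre_inner_axis by simp
  next
    case 3
    have "y \<in> cube k F y"
      using y disjoint_J_F three_le_k unfolding cube_def by auto
    moreover have "{y} - (axes k J - insert origin (corner k ` J)) = {y}"
      using 3 by blast
    ultimately show ?thesis
      using line_tileable_cube_Diff_point[OF finite_F] hooks_Int_fibre_empty[OF y 3] by simp
  qed
qed

lemma line_tileable_via_hooks:
  assumes "finite J" "line_tileable k (cube k F origin - {origin} - W)"
  shows "line_tileable k (cube k (J \<union> F) origin - insert origin (corner k ` J))"
proof -
  define X where "X = cube k (J \<union> F) origin - insert origin (corner k ` J)"
  define H where "H = hooks \<union> (cube k J origin - axes k J)"
  have "cube k J origin \<subseteq> cube k (J \<union> F) origin"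
    using three_le_k unfolding cube_def by auto
  moreover have "insert origin (corner k ` J) \<subseteq> axes k J" "axes k J \<subseteq> cube k J origin"
    using origin_corners_subset_axes three_le_k unfolding axes_def by auto
  ultimately have "H \<subseteq> X" and hooks_disjoint: "hooks \<inter> (cube k J origin - axes k J) = {}"
    using hooks_subset unfolding X_def H_def by blast+
  moreover have "line_tileable k H"
    unfolding H_def using line_tileable_hooks line_tileable_cube_Diff_axes assms(1) three_le_k
      hooks_disjoint by (intro line_tileable_Un) auto
  moreover have "line_tileable k (X - H)"
  proof (rule line_tileable_by_fibres[OF disjoint_J_F])
    show "X - H \<subseteq> cube k (J \<union> F) origin"
      unfolding X_def by blast
    show "line_tileable k ((X - H) \<inter> cube k F y)" if "y \<in> cube k J origin" for y
      unfolding X_def H_def fibre_Diff_hooks[OF that] using assms(2) that by (rule line_tileable_fibre)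
  qed
  ultimately have "line_tileable k ((X - H) \<union> H)"
    by (intro line_tileable_Un) auto
  then show ?thesis
    using \<open>H \<subseteq> X\<close> unfolding X_def by (simp add: Un_absorb2)
qed

end

lemma line_tileable_cube_Diff_origin_corners:
  assumes "finite J" "finite F" "J \<inter> F = {}" "3 \<le> k"
    and "(k - 1) dvd card J" "card J \<le> k ^ card F - 1"
  shows "line_tileable k (cube k (J \<union> F) origin - insert origin (corner k ` J))"
proof -
  have origin: "origin \<in> cube k F origin"
    using assms(4) unfolding cube_def by simp
  have "finite (cube k F origin - {origin})"
    using finite_cube[OF assms(2)] assms(4) by simp
  moreover have "card (cube k F origin - {origin}) = k ^ card F - 1"
    using origin card_cube[OF assms(2)] by simp
  ultimately obtain W where W: "W \<subseteq> cube k F origin - {origin}" "card W = card J"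
    "line_tileable k (cube k F origin - {origin} - W)"
    using line_tileable_obtain_Diff[OF line_tileable_cube_Diff_point[OF assms(2) origin]] assms(5,6)
    by metis
  then obtain g where "bij_betw g W J"
    using finite_same_card_bij \<open>finite (cube k F origin - {origin})\<close> assms(1)
    by (metis finite_subset)
  then interpret hook_system k J F W g
    using assms W(1) by unfold_locales
  show ?thesis
    using assms(1) W(3) by (rule line_tileable_via_hooks)
qed

lemma image_section_origin_to_corner:
  assumes "s \<notin> D" "0 < k"
  shows "(\<lambda>y. y(s := if y = origin then k - 1 else 0)) ` cube k D origin
    = insert (corner k s) (cube k D origin - {origin})"
proof -
  let ?f = "\<lambda>y. y(s := if y = origin then k - 1 else 0)"
  have "?f ` (cube k D origin - {origin}) = id ` (cube k D origin - {origin})"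
    using assms(1) unfolding cube_def by (intro image_cong) auto
  then have off_origin: "?f ` (cube k D origin - {origin}) = cube k D origin - {origin}"
    by simp
  have "origin \<in> cube k D origin"
    unfolding cube_def using assms(2) by simp
  then have "?f ` cube k D origin = ?f ` insert origin (cube k D origin - {origin})"
    by (simp add: insert_absorb)
  also have "\<dots> = insert (?f origin) (cube k D origin - {origin})"
    unfolding image_insert off_origin ..
  also have "?f origin = corner k s"
    unfolding corner_eq_origin_upd by simp
  finally show ?thesis .
qed

lemma line_tileable_cube_Diff_corners:
  assumes "finite D" "s \<in> J" "J \<subseteq> D" "3 \<le> k"
    and "(k - 1) dvd card (J - {s})" "card (J - {s}) \<le> k ^ card (D - J) - 1"
  shows "line_tileable k (cube k D origin - corner k ` J)"
proof -
  define D' where "D' = D - {s}"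
  have D: "D = insert s D'" "s \<notin> D'"
    using assms(2,3) unfolding D'_def by auto
  have section_eq: "(\<lambda>y. y(s := if y = origin then k - 1 else 0)) ` cube k D' origin
      = insert (corner k s) (cube k D' origin - {origin})"
    using D(2) assms(4) by (intro image_section_origin_to_corner) auto
  have "corner k j \<noteq> origin" for j
    using assms(4) by (simp add: corner_eq_origin_upd fun_upd_idem_iff)
  moreover have "corner k j \<in> cube k D' origin" if "j \<in> J - {s}" for j
    using that assms(3,4) unfolding D'_def cube_def corner_def by auto
  ultimately have corners_subset: "corner k ` J \<subseteq> insert (corner k s) (cube k D' origin - {origin})"
    by auto
  have "corner k s \<notin> cube k D' origin"
    using D(2) assms(4) unfolding cube_def corner_def by auto
  moreover have "corner k ` J = insert (corner k s) (corner k ` (J - {s}))"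
    using assms(2) by blast
  moreover have "(J - {s}) \<union> (D - J) = D'"
    using assms(2,3) unfolding D'_def by blast
  ultimately have "insert (corner k s) (cube k D' origin - {origin}) - corner k ` J
      = cube k ((J - {s}) \<union> (D - J)) origin - insert origin (corner k ` (J - {s}))"
    by blast
  moreover have "line_tileable k \<dots>"
    using assms by (intro line_tileable_cube_Diff_origin_corners) (auto intro: finite_subset)
  ultimately have "line_tileable k (cube k (insert s D') origin - corner k ` J)"
    using D(2) assms(4) corners_subset unfolding section_eq[symmetric]
    by (intro line_tileable_cube_insert_Diff) auto
  then show ?thesis
    using D(1) by simp
qed

subsection \<open>Copies of T\<close>

lemma image_add_mod_Diff:
  fixes i k p :: nat
  assumes "i \<in> {1..k}" "p < k"
  shows "(\<lambda>t. ((p + (k - i)) mod k + t) mod k) ` ({1..k} - {i}) = {..<k} - {p}"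
proof -
  define c where "c = (p + (k - i)) mod k"
  define f where "f t = (c + t) mod k" for t
  have "0 < k"
    using assms(2) by simp
  then have c: "c < k"
    unfolding c_def by simp
  have f_eq: "f t = (if c + t < k then c + t else c + t - k)" if "t \<in> {1..k}" for t
    using c that unfolding f_def by (auto simp: le_mod_geq)
  have "inj_on f {1..k}"
    by (rule inj_onI) (use f_eq c in \<open>auto split: if_splits\<close>)
  moreover have "f ` {1..k} \<subseteq> {..<k}"
    using assms(2) unfolding f_def by auto
  ultimately have "f ` {1..k} = {..<k}"
    by (intro card_subset_eq) (auto simp: card_image)
  moreover have "f i = p"
    using assms unfolding f_def c_def by (simp add: mod_add_left_eq)
  moreover have "f ` ({1..k} - {i}) = f ` {1..k} - f ` {i}"
    using \<open>inj_on f {1..k}\<close> assms(1) by (intro inj_on_image_set_diff) auto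
  ultimately show ?thesis
    unfolding f_def c_def by simp
qed

lemma copy_of_punctured_line:
  assumes "punctured_line k x s p \<subseteq> grid k d" "p < k" "3 \<le> k" "i \<in> {1..k}"
  shows "copy_of k d ({1..k} - {i}) (punctured_line k x s p)"
proof -
  define u where "u = (if p = 1 then 2 else (1::nat))"
  have "x(s := u) \<in> punctured_line k x s p"
    unfolding mem_punctured_line using assms(3) by (intro exI[of _ u]) (auto simp: u_def)
  then have "x(s := u) \<in> grid k d"
    using assms(1) by blast
  have "s < d"
  proof (rule ccontr)
    assume "\<not> s < d"
    then have "(x(s := u)) s = 0"
      using \<open>x(s := u) \<in> grid k d\<close> unfolding grid_def by (auto simp: not_less)
    then show False
      unfolding u_def by (simp split: if_splits)
  qed
  \<comment> \<open>the translate by c sends the missing element i of T to the puncture p\<close>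
  define c where "c = (p + (k - i)) mod k"
  have "c < k"
    using assms(2) unfolding c_def by (simp add: mod_less_divisor)
  then have x_c: "x(s := c) \<in> grid k d"
    using \<open>x(s := u) \<in> grid k d\<close> \<open>s < d\<close> unfolding grid_def by auto
  have "(\<lambda>t. (x(s := c))(s := ((x(s := c)) s + t) mod k)) ` ({1..k} - {i})
      = (\<lambda>v. x(s := v)) ` ((\<lambda>t. (c + t) mod k) ` ({1..k} - {i}))"
    by (simp add: image_image)
  also have "\<dots> = punctured_line k x s p"
    unfolding punctured_line_def c_def image_add_mod_Diff[OF assms(4,2)] ..
  finally show ?thesis
    unfolding copy_of_def using x_c \<open>s < d\<close> by blast
qed

lemma tiles_if_line_tileable:
  assumes "line_tileable k X" "X \<subseteq> grid k d" "3 \<le> k" "i \<in> {1..k}"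
  shows "tiles k d ({1..k} - {i}) X"
proof -
  obtain P where P: "P \<subseteq> punctured_lines k" "disjoint P" "\<Union>P = X"
    using assms(1) unfolding line_tileable_def by blast
  have "copy_of k d ({1..k} - {i}) L" if L: "L \<in> P" for L
  proof -
    obtain x s p where L_eq: "p < k" "L = punctured_line k x s p"
      using P(1) L unfolding punctured_lines_def by blast
    moreover have "L \<subseteq> grid k d"
      using P(3) assms(2) L by blast
    ultimately show ?thesis
      using copy_of_punctured_line[of k x s p d i] assms(3,4) by simp
  qed
  then show ?thesis
    unfolding tiles_def using P(2,3) by blast
qed

lemma le_pow_diff_if_le_diff_log:
  fixes k d c :: nat
  assumes "2 \<le> k" "1 \<le> d" "real c \<le> real d - log (real k) (real d)"
  shows "c \<le> d" "d \<le> k ^ (d - c)"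
proof -
  have "0 \<le> log (real k) (real d)"
    using assms(1,2) by simp
  then show "c \<le> d"
    using assms(3) by linarith
  then have "log (real k) (real d) \<le> real (d - c)"
    using assms(3) by (simp add: of_nat_diff)
  then have "real k powr log (real k) (real d) \<le> real k powr real (d - c)"
    using assms(1) by (intro powr_mono) auto
  then have "real d \<le> real k ^ (d - c)"
    using assms(1,2) by (simp add: powr_realpow)
  then show "d \<le> k ^ (d - c)"
    by (simp flip: of_nat_power)
qed

lemma inj_corner: "2 \<le> k \<Longrightarrow> inj (corner k)"
  unfolding corner_eq_origin_upd by (rule injI) (simp add: origin_upd_eq_origin_upd_iff)

lemma grid_eq_cube: "grid k d = cube k {..<d} origin"
  unfolding grid_def cube_def by auto

theorem lemma3:
  fixes k i d :: nat and S :: "(nat \<Rightarrow> nat) set"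
  assumes "k \<ge> 3" and "2 \<le> i" and "i \<le> k - 1"
    and "d \<ge> 1"
    and "S \<subseteq> corners k d"
    and "card S mod (k - 1) = 1 mod (k - 1)"
    and "real (card S) \<le> real d - log (real k) (real d)"
  shows "tiles k d ({1..k} - {i}) (grid k d - S)"
proof -
  define J where "J = {j. j < d \<and> corner k j \<in> S}"
  have J: "J \<subseteq> {..<d}" "finite J" "S = corner k ` J"
    using assms(5) unfolding J_def corners_def by (auto intro: finite_subset)
  have card_S: "card S = card J"
    unfolding J(3) using inj_corner[of k] assms(1) by (simp add: card_image inj_on_subset)
  then have "card J mod (k - 1) = 1"
    using assms(1,6) by simp
  then obtain s where "s \<in> J"
    by (metis card.empty ex_in_conv mod_0 zero_neq_one)
  moreover have "card (J - {s}) = card J - card J mod (k - 1)"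
    using \<open>card J mod (k - 1) = 1\<close> \<open>s \<in> J\<close> J(2) by simp
  then have "(k - 1) dvd card (J - {s})"
    by (simp only: dvd_minus_mod)
  moreover have "card J \<le> d" "d \<le> k ^ (d - card J)"
    using le_pow_diff_if_le_diff_log[of k d "card J"] assms(1,4,7) card_S by auto
  then have "card (J - {s}) \<le> k ^ card ({..<d} - J) - 1"
    using J(1,2) \<open>s \<in> J\<close> by (simp add: card_Diff_subset)
  ultimately have "line_tileable k (cube k {..<d} origin - corner k ` J)"
    using J(1) assms(1) by (intro line_tileable_cube_Diff_corners) auto
  then show ?thesis
    unfolding J(3) grid_eq_cube using assms(1-3)
    by (intro tiles_if_line_tileable) (auto simp flip: grid_eq_cube)
qed

end
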